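(* Let $K$ be a spherically complete valued field and $d\ge 1$. Then every nested family $\{C_i\}_{i\in I}$ of nonempty convex subsets of $K^d$ (i.e. for all $i,j$, $C_i\subseteq C_j$ or $C_j\subseteq C_i$) has nonempty intersection.
   Context: $K$ is a field with valuation $\nu:K\to\Gamma\cup\{\infty\}$, valuation ring $\mathcal{O}$. A ball in $K$ is a set $\{x:\nu(x-c)\ge r\}$ or $\{x:\nu(x-c)>r\}$ with $c\in K$, $r\in\Gamma$. $K$ is spherically complete if every nested family of balls in $K$ has nonempty intersection. A set $X\subseteq K^d$ is convex if it is closed under combinations $\sum_{i=1}^n\alpha_ix_i$ with $x_i\in X$, $\alpha_i\in\mathcal{O}$, $\sum\alpha_i=1$. *)

theory Defs
  imports "HOL-Analysis.Finite_Cartesian_Product"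
begin

text \<open>Values of a valuation: Some g for g in the ordered group Gamma, None for infinity.\<close>

fun vle :: "'g::linorder option \<Rightarrow> 'g option \<Rightarrow> bool" where
  "vle _ None = True"
| "vle None (Some _) = False"
| "vle (Some a) (Some b) = (a \<le> b)"

definition vlt :: "'g::linorder option \<Rightarrow> 'g option \<Rightarrow> bool" where
  "vlt a b \<longleftrightarrow> vle a b \<and> a \<noteq> b"

fun vplus :: "'g::plus option \<Rightarrow> 'g option \<Rightarrow> 'g option" where
  "vplus (Some a) (Some b) = Some (a + b)"
| "vplus _ _ = None"

definition valuation :: "('k::field \<Rightarrow> 'g::linordered_ab_group_add option) \<Rightarrow> bool" where
  "valuation \<nu> \<longleftrightarrow>
     (\<forall>x. \<nu> x = None \<longleftrightarrow> x = 0) \<and>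
     (\<forall>x y. \<nu> (x * y) = vplus (\<nu> x) (\<nu> y)) \<and>
     (\<forall>x y. vle (if vle (\<nu> x) (\<nu> y) then \<nu> x else \<nu> y) (\<nu> (x + y))) \<and>
     (\<forall>g. \<exists>x. \<nu> x = Some g)"

definition val_ring :: "('k::field \<Rightarrow> 'g::linordered_ab_group_add option) \<Rightarrow> 'k set" where
  "val_ring \<nu> = {x. vle (Some 0) (\<nu> x)}"

definition vball_closed :: "('k::field \<Rightarrow> 'g::linordered_ab_group_add option) \<Rightarrow> 'k \<Rightarrow> 'g \<Rightarrow> 'k set" where
  "vball_closed \<nu> c r = {x. vle (Some r) (\<nu> (x - c))}"

definition vball_open :: "('k::field \<Rightarrow> 'g::linordered_ab_group_add option) \<Rightarrow> 'k \<Rightarrow> 'g \<Rightarrow> 'k set" where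
  "vball_open \<nu> c r = {x. vlt (Some r) (\<nu> (x - c))}"

definition is_vball :: "('k::field \<Rightarrow> 'g::linordered_ab_group_add option) \<Rightarrow> 'k set \<Rightarrow> bool" where
  "is_vball \<nu> B \<longleftrightarrow> (\<exists>c r. B = vball_closed \<nu> c r \<or> B = vball_open \<nu> c r)"

definition spherically_complete :: "('k::field \<Rightarrow> 'g::linordered_ab_group_add option) \<Rightarrow> bool" where
  "spherically_complete \<nu> \<longleftrightarrow>
     (\<forall>\<B>. (\<forall>B\<in>\<B>. is_vball \<nu> B) \<longrightarrow> (\<forall>A\<in>\<B>. \<forall>B\<in>\<B>. A \<subseteq> B \<or> B \<subseteq> A) \<longrightarrow> \<Inter>\<B> \<noteq> {})"

text \<open>O-convex subsets of K^d (d = CARD('n)).\<close>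
definition vconvex :: "('k::field \<Rightarrow> 'g::linordered_ab_group_add option) \<Rightarrow> ('k ^ 'n) set \<Rightarrow> bool" where
  "vconvex \<nu> X \<longleftrightarrow>
     (\<forall>(n::nat) (\<alpha>::nat \<Rightarrow> 'k) (x::nat \<Rightarrow> 'k ^ 'n).
        (\<forall>i<n. x i \<in> X \<and> \<alpha> i \<in> val_ring \<nu>) \<and> (\<Sum>i<n. \<alpha> i) = 1 \<longrightarrow>
        (\<chi> j. \<Sum>i<n. \<alpha> i * x i $ j) \<in> X)"

end

theory Submission
  imports Defs
begin

text \<open>In dimension one, the balls containing some member of the family are pairwise nested
(intersecting ultrametric balls are comparable), so spherical completeness gives a point \<open>p\<close>
in all of them; if \<open>p\<close> missed some \<open>E\<^sub>i\<close>, convexity would put \<open>E\<^sub>i\<close> inside the open ball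
around any \<open>u \<in> E\<^sub>i\<close> of radius \<open>\<nu>(p - u)\<close>, which does not contain \<open>p\<close>. In dimension \<open>d\<close> one fixes
the coordinates one at a time: the sets of admissible values of the next coordinate, over points
of \<open>C\<^sub>i\<close> agreeing with the coordinates already chosen, form a nested family of convex subsets
of \<open>K\<close>.\<close>

lemma vle_trans: "vle a b \<Longrightarrow> vle b c \<Longrightarrow> vle (a::'g::linorder option) c"
  by (cases a; cases b; cases c) auto

lemma vlt_vle_trans: "vlt a b \<Longrightarrow> vle b c \<Longrightarrow> vlt (a::'g::linorder option) c"
  by (cases a; cases b; cases c) (auto simp: vlt_def)

lemma vle_Some_iff: "vle (Some r) w \<longleftrightarrow> (case w of None \<Rightarrow> True | Some a \<Rightarrow> r \<le> a)"
  by (cases w) auto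

lemma vlt_Some_iff: "vlt (Some r) w \<longleftrightarrow> (case w of None \<Rightarrow> True | Some a \<Rightarrow> r < a)"
  by (cases w) (auto simp: vlt_def)

context
  fixes \<nu> :: "'k::field \<Rightarrow> 'g::linordered_ab_group_add option"
  assumes val: "valuation \<nu>"
begin

lemma valuation_eq_None_iff: "\<nu> x = None \<longleftrightarrow> x = 0"
  using val by (simp add: valuation_def)

lemma valuation_mult: "\<nu> (x * y) = vplus (\<nu> x) (\<nu> y)"
  using val by (simp add: valuation_def)

lemma valuation_add_ge:
  assumes "vle s (\<nu> a)" "vle s (\<nu> b)" shows "vle s (\<nu> (a + b))"
proof -
  have "vle s (if vle (\<nu> a) (\<nu> b) then \<nu> a else \<nu> b)"
    using assms by simp
  then show ?thesis
    using val vle_trans unfolding valuation_def by blast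
qed

lemma valuation_add_gt:
  assumes "vlt s (\<nu> a)" "vlt s (\<nu> b)" shows "vlt s (\<nu> (a + b))"
proof -
  have "vlt s (if vle (\<nu> a) (\<nu> b) then \<nu> a else \<nu> b)"
    using assms by simp
  then show ?thesis
    using val vlt_vle_trans unfolding valuation_def by blast
qed

lemma valuation_square_unit:
  assumes "x * x = 1" shows "\<nu> x = Some 0"
proof -
  obtain a where a: "\<nu> x = Some a"
    using assms valuation_eq_None_iff by (cases "\<nu> x") auto
  obtain b where b: "\<nu> 1 = Some b"
    using valuation_eq_None_iff[of 1] by (cases "\<nu> 1") auto
  have "b + b = b"
    using valuation_mult[of 1 1] b by simp
  then have "a + a = 0"
    using valuation_mult[of x x] assms a b by simp
  then have "a = 0"
    by (metis add_neg_neg add_pos_pos less_irrefl linorder_neqE)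
  with a show ?thesis by simp
qed

lemma valuation_uminus: "\<nu> (- x) = \<nu> x"
proof -
  have "\<nu> (- x) = vplus (\<nu> (- 1)) (\<nu> x)"
    using valuation_mult[of "- 1" x] by simp
  then show ?thesis
    using valuation_square_unit[of "- 1"] by (cases "\<nu> x") auto
qed

lemma valuation_minus_commute: "\<nu> (x - y) = \<nu> (y - x)"
  using valuation_uminus[of "x - y"] by simp

lemma one_mem_val_ring: "1 \<in> val_ring \<nu>"
  using valuation_square_unit[of 1] by (simp add: val_ring_def)

lemma one_minus_mem_val_ring: "\<alpha> \<in> val_ring \<nu> \<Longrightarrow> 1 - \<alpha> \<in> val_ring \<nu>"
  using valuation_add_ge[of "Some 0" 1 "- \<alpha>"] one_mem_val_ring valuation_uminus[of \<alpha>]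
  by (simp add: val_ring_def)

lemma vball_closed_subset_recenter:
  assumes "z \<in> vball_closed \<nu> c r" shows "vball_closed \<nu> c r \<subseteq> vball_closed \<nu> z r"
proof
  fix x assume "x \<in> vball_closed \<nu> c r"
  then have "vle (Some r) (\<nu> ((x - c) + (c - z)))"
    using assms valuation_minus_commute[of z c]
    by (intro valuation_add_ge) (simp_all add: vball_closed_def)
  then show "x \<in> vball_closed \<nu> z r" by (simp add: vball_closed_def)
qed

lemma vball_open_subset_recenter:
  assumes "z \<in> vball_open \<nu> c r" shows "vball_open \<nu> c r \<subseteq> vball_open \<nu> z r"
proof
  fix x assume "x \<in> vball_open \<nu> c r"
  then have "vlt (Some r) (\<nu> ((x - c) + (c - z)))"
    using assms valuation_minus_commute[of z c]
    by (intro valuation_add_gt) (simp_all add: vball_open_def)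
  then show "x \<in> vball_open \<nu> z r" by (simp add: vball_open_def)
qed

lemma vball_closed_recenter:
  assumes "z \<in> vball_closed \<nu> c r" shows "vball_closed \<nu> c r = vball_closed \<nu> z r"
proof -
  have "c \<in> vball_closed \<nu> z r"
    using assms valuation_minus_commute by (simp add: vball_closed_def)
  then show ?thesis
    using assms vball_closed_subset_recenter by blast
qed

lemma vball_open_recenter:
  assumes "z \<in> vball_open \<nu> c r" shows "vball_open \<nu> c r = vball_open \<nu> z r"
proof -
  have "c \<in> vball_open \<nu> z r"
    using assms valuation_minus_commute by (simp add: vball_open_def)
  then show ?thesis
    using assms vball_open_subset_recenter by blast
qed

lemma is_vball_recenter:
  assumes "is_vball \<nu> A" "z \<in> A"
  obtains r where "A = vball_closed \<nu> z r \<or> A = vball_open \<nu> z r"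
  using assms vball_closed_recenter vball_open_recenter unfolding is_vball_def by metis

end

lemma vball_concentric_nested:
  fixes \<nu> :: "'k::field \<Rightarrow> 'g::linordered_ab_group_add option"
  assumes "A = vball_closed \<nu> z r \<or> A = vball_open \<nu> z r"
    and "B = vball_closed \<nu> z s \<or> B = vball_open \<nu> z s"
  shows "A \<subseteq> B \<or> B \<subseteq> A"
proof -
  have le: "vball_closed \<nu> z t \<subseteq> vball_closed \<nu> z r" "vball_open \<nu> z t \<subseteq> vball_open \<nu> z r"
    "vball_open \<nu> z t \<subseteq> vball_closed \<nu> z r" if "r \<le> t" for r t
    using that by (auto simp: vball_closed_def vball_open_def vle_Some_iff vlt_Some_iff
        split: option.splits)
  have lt: "vball_closed \<nu> z t \<subseteq> vball_open \<nu> z r" if "r < t" for r t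
    using that by (auto simp: vball_closed_def vball_open_def vle_Some_iff vlt_Some_iff
        split: option.splits)
  consider "r \<le> s" | "s < r" by fastforce
  then show ?thesis
  proof cases
    case 1
    then show ?thesis
    proof (cases "r = s")
      case False
      with 1 have "r < s" by simp
      then show ?thesis using assms le[OF 1] lt by blast
    qed (use assms le in blast)
  next
    case 2
    then show ?thesis using assms le[of s r] lt by force
  qed
qed

lemma vballs_nested:
  assumes "valuation \<nu>" "is_vball \<nu> A" "is_vball \<nu> B" "A \<inter> B \<noteq> {}"
  shows "A \<subseteq> B \<or> B \<subseteq> A"
proof -
  obtain z where "z \<in> A" "z \<in> B" using assms(4) by blast
  then show ?thesis
    using is_vball_recenter[OF assms(1,2)] is_vball_recenter[OF assms(1,3)]
      vball_concentric_nested by metis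
qed

definition segment_closed :: "('k::field \<Rightarrow> 'g::linordered_ab_group_add option) \<Rightarrow> 'k set \<Rightarrow> bool"
  where "segment_closed \<nu> E \<longleftrightarrow> (\<forall>u\<in>E. \<forall>v\<in>E. \<forall>\<alpha>\<in>val_ring \<nu>. u + \<alpha> * (v - u) \<in> E)"

lemma segment_closed_subset_vball_open:
  fixes \<nu> :: "'k::field \<Rightarrow> 'g::linordered_ab_group_add option"
  assumes val: "valuation \<nu>" and E: "segment_closed \<nu> E"
    and u: "u \<in> E" and p: "p \<notin> E" and r: "\<nu> (p - u) = Some r"
  shows "E \<subseteq> vball_open \<nu> u r"
proof
  fix v assume v: "v \<in> E"
  show "v \<in> vball_open \<nu> u r"
  proof (rule ccontr)
    assume "v \<notin> vball_open \<nu> u r"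
    then obtain s where s: "\<nu> (v - u) = Some s" "s \<le> r"
      by (cases "\<nu> (v - u)") (auto simp: vball_open_def vlt_Some_iff)
    then have "v - u \<noteq> 0"
      using valuation_eq_None_iff[OF val, of "v - u"] by auto
    define \<alpha> where "\<alpha> = (p - u) / (v - u)"
    have p_eq: "p = u + \<alpha> * (v - u)"
      using \<open>v - u \<noteq> 0\<close> by (simp add: \<alpha>_def)
    have "Some r = vplus (\<nu> \<alpha>) (Some s)"
      using valuation_mult[OF val, of \<alpha> "v - u"] p_eq r s by simp
    then obtain t where "\<nu> \<alpha> = Some t" "t = r - s"
      by (cases "\<nu> \<alpha>") (auto simp: eq_diff_eq)
    with s have "\<alpha> \<in> val_ring \<nu>"
      by (simp add: val_ring_def)
    then have "p \<in> E"
      using E u v p_eq unfolding segment_closed_def by blast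
    with p show False ..
  qed
qed

lemma spherically_complete_nested_segment_closed_Inter:
  fixes \<nu> :: "'k::field \<Rightarrow> 'g::linordered_ab_group_add option" and E :: "'i \<Rightarrow> 'k set"
  assumes val: "valuation \<nu>" and sc: "spherically_complete \<nu>"
    and ne: "\<forall>i\<in>I. E i \<noteq> {}" and conv: "\<forall>i\<in>I. segment_closed \<nu> (E i)"
    and nest: "\<forall>i\<in>I. \<forall>j\<in>I. E i \<subseteq> E j \<or> E j \<subseteq> E i"
  obtains p where "\<forall>i\<in>I. p \<in> E i"
proof -
  define \<B> where "\<B> = {B. is_vball \<nu> B \<and> (\<exists>i\<in>I. E i \<subseteq> B)}"
  have "A \<subseteq> B \<or> B \<subseteq> A" if AB: "A \<in> \<B>" "B \<in> \<B>" for A B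
  proof -
    obtain i j where ij: "i \<in> I" "j \<in> I" "E i \<subseteq> A" "E j \<subseteq> B"
      using AB unfolding \<B>_def by blast
    have "E i \<inter> E j \<noteq> {}"
    proof (cases "E i \<subseteq> E j")
      case True
      then show ?thesis using ne ij(1) by blast
    next
      case False
      then have "E j \<subseteq> E i" using nest ij(1,2) by blast
      then show ?thesis using ne ij(2) by blast
    qed
    with ij have "A \<inter> B \<noteq> {}" by blast
    moreover have "is_vball \<nu> A" "is_vball \<nu> B"
      using AB by (simp_all add: \<B>_def)
    ultimately show ?thesis
      using vballs_nested[OF val] by blast
  qed
  moreover have "\<forall>B\<in>\<B>. is_vball \<nu> B"
    by (simp add: \<B>_def)
  ultimately have "\<Inter>\<B> \<noteq> {}"
    using sc by (simp add: spherically_complete_def)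
  then obtain p where p: "p \<in> \<Inter>\<B>"
    by (meson ex_in_conv)
  have "p \<in> E i" if i: "i \<in> I" for i
  proof (rule ccontr)
    assume p_notin: "p \<notin> E i"
    obtain u where u: "u \<in> E i" using ne i by blast
    then obtain r where r: "\<nu> (p - u) = Some r"
      using p_notin valuation_eq_None_iff[OF val, of "p - u"] by (cases "\<nu> (p - u)") auto
    have "E i \<subseteq> vball_open \<nu> u r"
      using segment_closed_subset_vball_open[OF val _ u p_notin r] conv i by blast
    moreover have "is_vball \<nu> (vball_open \<nu> u r)"
      unfolding is_vball_def by blast
    ultimately have "vball_open \<nu> u r \<in> \<B>"
      using i unfolding \<B>_def by blast
    with p have "p \<in> vball_open \<nu> u r" by blast
    with r show False by (simp add: vball_open_def vlt_def)
  qed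
  then show ?thesis using that by blast
qed

lemma vconvex_segment:
  fixes \<nu> :: "'k::field \<Rightarrow> 'g::linordered_ab_group_add option"
  assumes val: "valuation \<nu>" and C: "vconvex \<nu> C"
    and "x \<in> C" "y \<in> C" "\<alpha> \<in> val_ring \<nu>"
  shows "(\<chi> j. (1 - \<alpha>) * x $ j + \<alpha> * y $ j) \<in> C"
proof -
  define \<beta> :: "nat \<Rightarrow> 'k" where "\<beta> k = (if k = 0 then 1 - \<alpha> else \<alpha>)" for k
  define w where "w k = (if k = 0 then x else y)" for k :: nat
  have "\<forall>k<2. w k \<in> C \<and> \<beta> k \<in> val_ring \<nu>"
    using assms one_minus_mem_val_ring[OF val] by (simp add: w_def \<beta>_def less_2_cases_iff)
  moreover have "(\<Sum>k<2. \<beta> k) = 1"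
    by (simp add: \<beta>_def numeral_2_eq_2)
  ultimately have "(\<chi> j. \<Sum>k<2. \<beta> k * w k $ j) \<in> C"
    using C unfolding vconvex_def by blast
  then show ?thesis
    by (simp add: \<beta>_def w_def numeral_2_eq_2)
qed

lemma vconvex_fibre_segment_closed:
  assumes val: "valuation \<nu>" and C: "vconvex \<nu> C"
  shows "segment_closed \<nu> {x $ j | x. x \<in> C \<and> (\<forall>k\<in>J. x $ k = a $ k)}"
  unfolding segment_closed_def
proof (intro ballI)
  fix u v \<alpha>
  assume "u \<in> {x $ j | x. x \<in> C \<and> (\<forall>k\<in>J. x $ k = a $ k)}"
    "v \<in> {x $ j | x. x \<in> C \<and> (\<forall>k\<in>J. x $ k = a $ k)}" and \<alpha>: "\<alpha> \<in> val_ring \<nu>"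
  then obtain x y where xy: "x \<in> C" "\<forall>k\<in>J. x $ k = a $ k" "u = x $ j"
    "y \<in> C" "\<forall>k\<in>J. y $ k = a $ k" "v = y $ j"
    by blast
  define z where "z = (\<chi> j. (1 - \<alpha>) * x $ j + \<alpha> * y $ j)"
  have "z \<in> C"
    using vconvex_segment[OF val C xy(1,4) \<alpha>] by (simp add: z_def)
  moreover have "\<forall>k\<in>J. z $ k = a $ k" "z $ j = u + \<alpha> * (v - u)"
    using xy by (simp_all add: z_def algebra_simps)
  ultimately show "u + \<alpha> * (v - u) \<in> {x $ j | x. x \<in> C \<and> (\<forall>k\<in>J. x $ k = a $ k)}"
    by (intro CollectI exI[of _ z]) simp
qed

lemma spherically_complete_nested_vconvex_coords:
  fixes \<nu> :: "'k::field \<Rightarrow> 'g::linordered_ab_group_add option"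
    and C :: "'i \<Rightarrow> ('k ^ 'n) set"
  assumes val: "valuation \<nu>" and sc: "spherically_complete \<nu>"
    and conv: "\<forall>i\<in>I. C i \<noteq> {} \<and> vconvex \<nu> (C i)"
    and nest: "\<forall>i\<in>I. \<forall>j\<in>I. C i \<subseteq> C j \<or> C j \<subseteq> C i"
    and "finite J"
  shows "\<exists>a. \<forall>i\<in>I. \<exists>x\<in>C i. \<forall>k\<in>J. x $ k = a $ k"
  using \<open>finite J\<close>
proof (induction J rule: finite_induct)
  case empty
  then show ?case using conv by auto
next
  case (insert j J)
  then obtain a where a: "\<forall>i\<in>I. \<exists>x\<in>C i. \<forall>k\<in>J. x $ k = a $ k" by blast
  define E where "E i = {x $ j | x. x \<in> C i \<and> (\<forall>k\<in>J. x $ k = a $ k)}" for i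
  have E_mono: "E i \<subseteq> E i'" if "C i \<subseteq> C i'" for i i'
    using that unfolding E_def by blast
  have "\<forall>i\<in>I. E i \<noteq> {}"
    using a by (auto simp: E_def)
  moreover have "\<forall>i\<in>I. segment_closed \<nu> (E i)"
    using conv vconvex_fibre_segment_closed[OF val, of "C _" j J a] by (simp add: E_def)
  moreover have "\<forall>i\<in>I. \<forall>i'\<in>I. E i \<subseteq> E i' \<or> E i' \<subseteq> E i"
    using nest E_mono by metis
  ultimately obtain p where p: "\<forall>i\<in>I. p \<in> E i"
    using spherically_complete_nested_segment_closed_Inter[OF val sc] by metis
  define a' where "a' = (\<chi> k. if k = j then p else a $ k)"
  have "\<exists>x\<in>C i. \<forall>k\<in>insert j J. x $ k = a' $ k" if i: "i \<in> I" for i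
  proof -
    obtain x where "x \<in> C i" "\<forall>k\<in>J. x $ k = a $ k" "p = x $ j"
      using p i by (auto simp: E_def)
    then show ?thesis by (auto simp: a'_def)
  qed
  then show ?case by blast
qed

theorem lemma3p4:
  fixes \<nu> :: "'k::field \<Rightarrow> 'g::linordered_ab_group_add option"
    and C :: "'i \<Rightarrow> ('k ^ 'n) set" and I :: "'i set"
  assumes "valuation \<nu>"
    and "spherically_complete \<nu>"
    and "\<forall>i\<in>I. C i \<noteq> {} \<and> vconvex \<nu> (C i)"
    and "\<forall>i\<in>I. \<forall>j\<in>I. C i \<subseteq> C j \<or> C j \<subseteq> C i"
  shows "(\<Inter>i\<in>I. C i) \<noteq> {}"
proof -
  obtain a where "\<forall>i\<in>I. \<exists>x\<in>C i. \<forall>k\<in>UNIV. x $ k = a $ k"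
    using spherically_complete_nested_vconvex_coords[OF assms, of UNIV] by auto
  then have "a \<in> (\<Inter>i\<in>I. C i)"
    by (metis INT_I vec_eq_iff UNIV_I)
  then show ?thesis by blast
qed

end
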